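(* Let $f_1,\dots,f_n:\mathbb{R}^d\to\mathbb{R}$ be such that each $f_i$ is $L_i$-smooth and $f_i^*=\min_xf_i(x)$ exists; let $x_i$ be a stationary point of $f_i$. Let $\alpha_i\in(0,1)$, $T_i(x)=\alpha_ix+(1-\alpha_i)x_i$, $\tilde f(x)=\frac1n\sum_if_i(T_i(x))$, $L_\alpha=\frac1n\sum_i\alpha_i^2L_i$ and $f^*=\frac1n\sum_if_i^*$. Let $\omega_i\ge0$ and consider distributed compressed gradient descent on $\tilde f$: $x^{t+1}=x^t-\gamma\frac1n\sum_{i=1}^n\mathcal{C}_i^t(\alpha_i\nabla f_i(T_i(x^t)))$, with $\mathcal{C}_i^t\in\mathbb{B}^d(\omega_i)$ drawn independently across $i,t$. If $0<\gamma\leq\frac{1}{L_\alpha}$, then for all $k\geq1$ \[\min_{0\leq t\leq k-1}\mathbb{E}\|\nabla\tilde f(x^t)\|^2\leq\frac{2\left(1+\frac{2L_\alpha\gamma^2\max_i\{L_i\omega_i\alpha_i^2\}}{n}\right)^k}{\gamma k}(\tilde f(x^0)-f^* ).\]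
   Context: A (random) operator $\mathcal{C}$ belongs to $\mathbb{B}^d(\omega)$ if $\mathbb{E}[\mathcal{C}(x)] = x$ and $\mathbb{E}\|\mathcal{C}(x)-x\|^2\leq\omega\|x\|^2$ for all $x$. A differentiable $g$ is $L$-smooth if $\|\nabla g(x)-\nabla g(y)\|\leq L\|x-y\|$ for all $x,y$. No convexity is assumed. *)

theory Defs
  imports "HOL-Analysis.Analysis" "HOL-Probability.Probability"
begin

definition L_smooth :: "real \<Rightarrow> ('v::real_inner \<Rightarrow> real) \<Rightarrow> ('v \<Rightarrow> 'v) \<Rightarrow> bool" where
  "L_smooth L f g \<longleftrightarrow> (\<forall>x. GDERIV f x :> g x) \<and> (\<forall>x y. norm (g x - g y) \<le> L * norm (x - y))"

text \<open>A random operator C (C w x = value of the operator drawn at outcome w, applied to x)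
  on the probability space M belongs to the class B(omega).\<close>
definition in_B :: "'a measure \<Rightarrow> ('a \<Rightarrow> 'v::euclidean_space \<Rightarrow> 'v) \<Rightarrow> real \<Rightarrow> bool" where
  "in_B M C om \<longleftrightarrow> (\<forall>x. integrable M (\<lambda>w. C w x) \<and> (\<integral>w. C w x \<partial>M) = x \<and>
      (\<integral>\<^sup>+ w. ennreal ((norm (C w x - x))\<^sup>2) \<partial>M) \<le> ennreal (om * (norm x)\<^sup>2))"

end

theory Submission
  imports Defs
begin

(*
  The averaged function f~ is L_alpha-smooth with gradient (1/n) sum_i alpha_i grad f_i (T_i x),
  so every step obeys the descent inequality f~(y) <= f~(x) + <grad f~ x, y - x> + L_alpha/2 |y - x|^2.
  Given the past, the n compressed messages are independent and unbiased, hence the expected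
  squared norm of the step direction is |grad f~ x|^2 plus 1/n^2 times the sum of the compression
  variances, and the i-th variance is at most
  omega_i alpha_i^2 |grad f_i (T_i x)|^2 <= 2 L_i omega_i alpha_i^2 [f_i (T_i x) - f_i^*].
  With gamma L_alpha <= 1 this yields, for delta_t = E f~(x^t) - f^*,
    delta_(t+1) + gamma/2 E |grad f~ (x^t)|^2
      <= (1 + L_alpha gamma^2 max_i L_i omega_i alpha_i^2 / n) delta_t,
  and unrolling over t < k bounds the minimum; this is the claimed bound without the factor 2
  inside the power.
*)

section \<open>Smooth functions\<close>

lemma gderiv_unique:
  assumes "GDERIV f x :> a" "GDERIV f x :> b"
  shows "a = b"
proof -
  have "(\<lambda>h. h \<bullet> a) = (\<lambda>h. h \<bullet> b)"
    using assms unfolding gderiv_def by (rule has_derivative_unique)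
  then have "(a - b) \<bullet> (a - b) = 0"
    by (metis inner_diff_right right_minus_eq)
  then show ?thesis by simp
qed

lemma L_smooth_nonneg:
  fixes f :: "'v::euclidean_space \<Rightarrow> real"
  assumes "L_smooth L f g"
  shows "0 \<le> L"
proof -
  obtain b :: 'v where b: "b \<in> Basis" using nonempty_Basis by blast
  have "norm (g b - g 0) \<le> L * norm (b - 0)"
    using assms unfolding L_smooth_def by blast
  with b show ?thesis by (metis norm_Basis diff_zero mult.right_neutral norm_ge_zero order_trans)
qed

lemma L_smooth_continuous:
  assumes "L_smooth L f g"
  shows "continuous_on UNIV f"
  using assms unfolding L_smooth_def gderiv_def
  by (metis continuous_at_imp_continuous_on has_derivative_continuous)

lemma L_smooth_gradient_continuous:
  fixes f :: "'v::euclidean_space \<Rightarrow> real"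
  assumes "L_smooth L f g"
  shows "continuous_on UNIV g"
proof (rule lipschitz_on_continuous_on)
  show "L-lipschitz_on UNIV g"
    using assms L_smooth_nonneg[OF assms] unfolding L_smooth_def
    by (intro lipschitz_onI) (auto simp: dist_norm)
qed

lemma L_smooth_affine:
  assumes "L_smooth L f g"
  shows "L_smooth (a\<^sup>2 * L) (\<lambda>x. f (a *\<^sub>R x + c)) (\<lambda>x. a *\<^sub>R g (a *\<^sub>R x + c))"
  unfolding L_smooth_def
proof safe
  fix x
  have "((\<lambda>x. a *\<^sub>R x + c) has_derivative (\<lambda>h. a *\<^sub>R h)) (at x)"
    by (auto intro!: derivative_eq_intros)
  from has_derivative_compose[OF this, of f "\<lambda>h. h \<bullet> g (a *\<^sub>R x + c)"]
  show "GDERIV (\<lambda>x. f (a *\<^sub>R x + c)) x :> a *\<^sub>R g (a *\<^sub>R x + c)"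
    using assms unfolding L_smooth_def gderiv_def by (simp add: o_def)
next
  fix x y
  have "norm (a *\<^sub>R g (a *\<^sub>R x + c) - a *\<^sub>R g (a *\<^sub>R y + c))
      = \<bar>a\<bar> * norm (g (a *\<^sub>R x + c) - g (a *\<^sub>R y + c))"
    by (simp flip: scaleR_diff_right)
  also have "\<dots> \<le> \<bar>a\<bar> * (L * norm ((a *\<^sub>R x + c) - (a *\<^sub>R y + c)))"
    using assms unfolding L_smooth_def by (intro mult_left_mono) (blast, simp)
  also have "\<dots> = a\<^sup>2 * L * norm (x - y)"
    by (simp flip: scaleR_diff_right add: power2_eq_square)
  finally show "norm (a *\<^sub>R g (a *\<^sub>R x + c) - a *\<^sub>R g (a *\<^sub>R y + c)) \<le> a\<^sup>2 * L * norm (x - y)" .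
qed

lemma L_smooth_sum:
  assumes "finite I" "\<And>i. i \<in> I \<Longrightarrow> L_smooth (L i) (f i) (g i)"
  shows "L_smooth (\<Sum>i\<in>I. L i) (\<lambda>x. \<Sum>i\<in>I. f i x) (\<lambda>x. \<Sum>i\<in>I. g i x)"
  unfolding L_smooth_def
proof safe
  fix x
  have "((\<lambda>x. \<Sum>i\<in>I. f i x) has_derivative (\<lambda>h. \<Sum>i\<in>I. h \<bullet> g i x)) (at x)"
    using assms(2) unfolding L_smooth_def gderiv_def by (intro has_derivative_sum) auto
  then show "GDERIV (\<lambda>x. \<Sum>i\<in>I. f i x) x :> (\<Sum>i\<in>I. g i x)"
    unfolding gderiv_def by (simp add: inner_sum_right)
next
  fix x y
  have "norm ((\<Sum>i\<in>I. g i x) - (\<Sum>i\<in>I. g i y)) \<le> (\<Sum>i\<in>I. norm (g i x - g i y))"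
    by (simp flip: sum_subtractf add: norm_sum)
  also have "\<dots> \<le> (\<Sum>i\<in>I. L i * norm (x - y))"
    using assms(2) unfolding L_smooth_def by (intro sum_mono) auto
  finally show "norm ((\<Sum>i\<in>I. g i x) - (\<Sum>i\<in>I. g i y)) \<le> (\<Sum>i\<in>I. L i) * norm (x - y)"
    by (simp add: sum_distrib_right)
qed

lemma L_smooth_scale:
  assumes "L_smooth L f g" "0 \<le> c"
  shows "L_smooth (c * L) (\<lambda>x. c * f x) (\<lambda>x. c *\<^sub>R g x)"
  using assms unfolding L_smooth_def gderiv_def
  by (auto simp flip: scaleR_diff_right simp: mult.assoc intro!: mult_left_mono
      has_derivative_eq_rhs[OF has_derivative_mult_right])

lemma L_smooth_descent:
  fixes f :: "'v::real_inner \<Rightarrow> real"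
  assumes sm: "L_smooth L f g"
  shows "f y \<le> f x + g x \<bullet> (y - x) + L / 2 * (norm (y - x))\<^sup>2"
proof -
  define h where "h = y - x"
  define \<phi> where "\<phi> s = f (x + s *\<^sub>R h) - s * (g x \<bullet> h) - L / 2 * s\<^sup>2 * (norm h)\<^sup>2" for s
  have der: "(\<phi> has_real_derivative (g (x + s *\<^sub>R h) - g x) \<bullet> h - L * s * (norm h)\<^sup>2) (at s)" for s
  proof -
    have "((\<lambda>s. x + s *\<^sub>R h) has_derivative (\<lambda>u. u *\<^sub>R h)) (at s)"
      by (auto intro!: derivative_eq_intros)
    from has_derivative_compose[OF this, of f "\<lambda>u. u \<bullet> g (x + s *\<^sub>R h)"]
    have "((\<lambda>s. f (x + s *\<^sub>R h)) has_derivative (\<lambda>u. (u *\<^sub>R h) \<bullet> g (x + s *\<^sub>R h))) (at s)"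
      using sm unfolding L_smooth_def gderiv_def by (simp add: o_def)
    then have "((\<lambda>s. f (x + s *\<^sub>R h)) has_real_derivative g (x + s *\<^sub>R h) \<bullet> h) (at s)"
      unfolding has_field_derivative_def
      by (rule has_derivative_eq_rhs) (auto simp: fun_eq_iff inner_commute)
    then show ?thesis unfolding \<phi>_def
      by (auto intro!: derivative_eq_intros simp: power2_eq_square algebra_simps inner_diff_left)
  qed
  have "\<phi> 1 \<le> \<phi> 0"
  proof (rule DERIV_nonpos_imp_nonincreasing[of 0 1])
    fix s :: real assume s: "0 \<le> s" "s \<le> 1"
    have "(g (x + s *\<^sub>R h) - g x) \<bullet> h \<le> norm (g (x + s *\<^sub>R h) - g x) * norm h"
      by (rule norm_cauchy_schwarz)
    also have "\<dots> \<le> L * norm (s *\<^sub>R h) * norm h"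
      using sm unfolding L_smooth_def by (intro mult_right_mono) (metis add_diff_cancel_left', simp)
    also have "\<dots> = L * s * (norm h)\<^sup>2"
      using s by (simp add: power2_eq_square)
    finally show "\<exists>y. (\<phi> has_real_derivative y) (at s) \<and> y \<le> 0"
      using der by force
  qed simp
  then show ?thesis unfolding \<phi>_def h_def by simp
qed

lemma L_smooth_gradient_bound:
  fixes f :: "'v::euclidean_space \<Rightarrow> real"
  assumes sm: "L_smooth L f g" and lb: "\<And>y. m \<le> f y"
  shows "(norm (g x))\<^sup>2 \<le> 2 * L * (f x - m)"
proof -
  have step: "m \<le> f x - t * (norm (g x))\<^sup>2 + L / 2 * t\<^sup>2 * (norm (g x))\<^sup>2" for t
  proof -
    have "m \<le> f (x - t *\<^sub>R g x)" by (rule lb)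
    also have "\<dots> \<le> f x + g x \<bullet> ((x - t *\<^sub>R g x) - x) + L / 2 * (norm ((x - t *\<^sub>R g x) - x))\<^sup>2"
      by (rule L_smooth_descent[OF sm])
    also have "\<dots> = f x - t * (norm (g x))\<^sup>2 + L / 2 * t\<^sup>2 * (norm (g x))\<^sup>2"
      by (simp add: power2_norm_eq_inner power_mult_distrib)
    finally show ?thesis .
  qed
  show ?thesis
  proof (cases "L = 0")
    case True
    show ?thesis
    proof (rule ccontr)
      assume "\<not> ?thesis"
      then have pos: "(norm (g x))\<^sup>2 > 0" using True by simp
      from step[of "(f x - m + 1) / (norm (g x))\<^sup>2"] show False
        using True pos by (simp add: field_simps)
    qed
  next
    case False
    then have L: "L > 0" using L_smooth_nonneg[OF sm] by simp
    from step[of "1 / L"] show ?thesis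
      using L by (simp add: field_simps power2_eq_square)
  qed
qed

section \<open>Independent random vectors\<close>

lemma in_B_variance:
  assumes "in_B M C \<omega>" "0 \<le> \<omega>"
  shows "integrable M (\<lambda>w. (norm (C w x - x))\<^sup>2)"
    and "(\<integral>w. (norm (C w x - x))\<^sup>2 \<partial>M) \<le> \<omega> * (norm x)\<^sup>2"
proof -
  have C: "integrable M (\<lambda>w. C w x)"
    and bound: "(\<integral>\<^sup>+ w. ennreal ((norm (C w x - x))\<^sup>2) \<partial>M) \<le> ennreal (\<omega> * (norm x)\<^sup>2)"
    using assms(1) unfolding in_B_def by auto
  show int: "integrable M (\<lambda>w. (norm (C w x - x))\<^sup>2)"
    using C bound by (intro integrableI_bounded) (auto simp: top.not_eq_extremum le_less_trans)
  have "ennreal (\<integral>w. (norm (C w x - x))\<^sup>2 \<partial>M) = (\<integral>\<^sup>+ w. ennreal ((norm (C w x - x))\<^sup>2) \<partial>M)"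
    using int by (simp add: nn_integral_eq_integral)
  with bound have "ennreal (\<integral>w. (norm (C w x - x))\<^sup>2 \<partial>M) \<le> ennreal (\<omega> * (norm x)\<^sup>2)"
    by simp
  then show "(\<integral>w. (norm (C w x - x))\<^sup>2 \<partial>M) \<le> \<omega> * (norm x)\<^sup>2"
    using assms(2) by (simp add: ennreal_le_iff)
qed

context prob_space
begin

lemma second_moment_eq_variance:
  fixes X :: "'a \<Rightarrow> 'v::euclidean_space"
  assumes X: "integrable M X" and V: "integrable M (\<lambda>w. (norm (X w - expectation X))\<^sup>2)"
  shows "integrable M (\<lambda>w. (norm (X w))\<^sup>2)"
    and "(\<integral>w. (norm (X w))\<^sup>2 \<partial>M) = (norm (expectation X))\<^sup>2 + (\<integral>w. (norm (X w - expectation X))\<^sup>2 \<partial>M)"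
proof -
  let ?\<mu> = "expectation X"
  have split: "(norm (X w))\<^sup>2 = (norm ?\<mu>)\<^sup>2 + 2 * (?\<mu> \<bullet> (X w - ?\<mu>)) + (norm (X w - ?\<mu>))\<^sup>2" for w
    by (simp add: power2_norm_eq_inner inner_diff_left inner_diff_right inner_commute)
  have int: "integrable M (\<lambda>w. (norm ?\<mu>)\<^sup>2 + 2 * (?\<mu> \<bullet> (X w - ?\<mu>)) + (norm (X w - ?\<mu>))\<^sup>2)"
    using X V by auto
  then show "integrable M (\<lambda>w. (norm (X w))\<^sup>2)"
    unfolding split .
  show "(\<integral>w. (norm (X w))\<^sup>2 \<partial>M) = (norm ?\<mu>)\<^sup>2 + (\<integral>w. (norm (X w - ?\<mu>))\<^sup>2 \<partial>M)"
    unfolding split using X V by (simp add: prob_space inner_diff_right)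
qed

lemma indep_var_inner:
  fixes X Y :: "'a \<Rightarrow> 'v::euclidean_space"
  assumes ind: "indep_var borel X borel Y" and X: "integrable M X" and Y: "integrable M Y"
  shows "integrable M (\<lambda>w. X w \<bullet> Y w)"
    and "(\<integral>w. X w \<bullet> Y w \<partial>M) = expectation X \<bullet> expectation Y"
proof -
  have coord: "integrable M (\<lambda>w. (X w \<bullet> b) * (Y w \<bullet> b)) \<and>
      (\<integral>w. (X w \<bullet> b) * (Y w \<bullet> b) \<partial>M) = (expectation X \<bullet> b) * (expectation Y \<bullet> b)" for b
  proof -
    have "(\<lambda>z. z \<bullet> b) \<in> borel_measurable (borel :: 'v measure)"
      by simp
    from indep_var_compose[OF ind this this]
    have ind_b: "indep_var borel (\<lambda>w. X w \<bullet> b) borel (\<lambda>w. Y w \<bullet> b)"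
      by (simp add: o_def)
    have "integrable M (\<lambda>w. X w \<bullet> b)" "integrable M (\<lambda>w. Y w \<bullet> b)"
      using X Y by auto
    from indep_var_integrable[OF ind_b this] indep_var_lebesgue_integral[OF ind_b this]
    show ?thesis
      using X Y by simp
  qed
  have inner: "X w \<bullet> Y w = (\<Sum>b\<in>Basis. (X w \<bullet> b) * (Y w \<bullet> b))" for w
    by (rule euclidean_inner)
  show "integrable M (\<lambda>w. X w \<bullet> Y w)"
    unfolding inner using coord by (intro Bochner_Integration.integrable_sum) auto
  show "(\<integral>w. X w \<bullet> Y w \<partial>M) = expectation X \<bullet> expectation Y"
    unfolding inner using coord
    by (simp add: Bochner_Integration.integral_sum euclidean_inner[of "expectation X" "expectation Y"])
qed

lemma second_moment_sum_indep:
  fixes X :: "'i \<Rightarrow> 'a \<Rightarrow> 'v::euclidean_space"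
  assumes I: "finite I"
    and X: "\<And>i. i \<in> I \<Longrightarrow> integrable M (X i)"
    and V: "\<And>i. i \<in> I \<Longrightarrow> integrable M (\<lambda>w. (norm (X i w - expectation (X i)))\<^sup>2)"
    and ind: "\<And>i j. i \<in> I \<Longrightarrow> j \<in> I \<Longrightarrow> i \<noteq> j \<Longrightarrow> indep_var borel (X i) borel (X j)"
  shows "integrable M (\<lambda>w. (norm (\<Sum>i\<in>I. X i w))\<^sup>2)"
    and "(\<integral>w. (norm (\<Sum>i\<in>I. X i w))\<^sup>2 \<partial>M) = (norm (\<Sum>i\<in>I. expectation (X i)))\<^sup>2
           + (\<Sum>i\<in>I. \<integral>w. (norm (X i w - expectation (X i)))\<^sup>2 \<partial>M)"
proof -
  let ?V = "\<lambda>i. \<integral>w. (norm (X i w - expectation (X i)))\<^sup>2 \<partial>M"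
  have entry: "integrable M (\<lambda>w. X i w \<bullet> X j w) \<and>
      (\<integral>w. X i w \<bullet> X j w \<partial>M) = expectation (X i) \<bullet> expectation (X j) + (if i = j then ?V i else 0)"
    if "i \<in> I" "j \<in> I" for i j
  proof (cases "i = j")
    case True
    then show ?thesis
      using second_moment_eq_variance[OF X V, OF \<open>i \<in> I\<close> \<open>i \<in> I\<close>]
      by (simp add: power2_norm_eq_inner)
  next
    case False
    then show ?thesis
      using indep_var_inner[OF ind X X] that by simp
  qed
  have gram: "(norm (\<Sum>i\<in>I. x i))\<^sup>2 = (\<Sum>i\<in>I. \<Sum>j\<in>I. x i \<bullet> x j)" for x :: "'i \<Rightarrow> 'v"
    unfolding power2_norm_eq_inner inner_sum_left by (simp add: inner_sum_right)
  show "integrable M (\<lambda>w. (norm (\<Sum>i\<in>I. X i w))\<^sup>2)"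
    unfolding gram using entry by auto
  have "(\<integral>w. (norm (\<Sum>i\<in>I. X i w))\<^sup>2 \<partial>M) = (\<Sum>i\<in>I. \<Sum>j\<in>I. \<integral>w. X i w \<bullet> X j w \<partial>M)"
    unfolding gram using entry by (simp add: Bochner_Integration.integral_sum integrable_sum)
  also have "\<dots> = (\<Sum>i\<in>I. \<Sum>j\<in>I. expectation (X i) \<bullet> expectation (X j) + (if i = j then ?V i else 0))"
    using entry by (intro sum.cong) auto
  also have "\<dots> = (\<Sum>i\<in>I. \<Sum>j\<in>I. expectation (X i) \<bullet> expectation (X j)) + (\<Sum>i\<in>I. ?V i)"
    using I by (simp add: sum.distrib)
  finally show "(\<integral>w. (norm (\<Sum>i\<in>I. X i w))\<^sup>2 \<partial>M) = (norm (\<Sum>i\<in>I. expectation (X i)))\<^sup>2 + (\<Sum>i\<in>I. ?V i)"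
    by (simp only: gram)
qed

lemma nn_integral_indep_freeze:
  assumes ind: "indep_var N1 Y N2 W" and H: "H \<in> borel_measurable (N1 \<Otimes>\<^sub>M N2)"
  shows "(\<integral>\<^sup>+ w. H (Y w, W w) \<partial>M) = (\<integral>\<^sup>+ w. (\<integral>\<^sup>+ w'. H (Y w, W w') \<partial>M) \<partial>M)"
proof -
  have Y: "Y \<in> measurable M N1" and W: "W \<in> measurable M N2"
    and prod: "distr M N1 Y \<Otimes>\<^sub>M distr M N2 W = distr M (N1 \<Otimes>\<^sub>M N2) (\<lambda>w. (Y w, W w))"
    using ind unfolding indep_var_distribution_eq by auto
  interpret PW: prob_space "distr M N2 W" by (rule prob_space_distr[OF W])
  have H_distr: "H \<in> borel_measurable (distr M N1 Y \<Otimes>\<^sub>M distr M N2 W)"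
    using H by (simp cong: measurable_cong_sets)
  have inner: "(\<lambda>y. \<integral>\<^sup>+ z. H (y, z) \<partial>distr M N2 W) \<in> borel_measurable N1"
    using PW.borel_measurable_nn_integral_fst[OF H_distr] by (simp cong: measurable_cong_sets)
  have "(\<integral>\<^sup>+ w. H (Y w, W w) \<partial>M) = integral\<^sup>N (distr M (N1 \<Otimes>\<^sub>M N2) (\<lambda>w. (Y w, W w))) H"
    using Y W H by (simp add: nn_integral_distr)
  also have "\<dots> = (\<integral>\<^sup>+ y. \<integral>\<^sup>+ z. H (y, z) \<partial>distr M N2 W \<partial>distr M N1 Y)"
    unfolding prod[symmetric] using H_distr by (rule PW.nn_integral_fst[symmetric])
  also have "\<dots> = (\<integral>\<^sup>+ w. \<integral>\<^sup>+ z. H (Y w, z) \<partial>distr M N2 W \<partial>M)"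
    using Y inner by (simp add: nn_integral_distr)
  also have "\<dots> = (\<integral>\<^sup>+ w. (\<integral>\<^sup>+ w'. H (Y w, W w') \<partial>M) \<partial>M)"
    using Y W H by (intro nn_integral_cong) (simp add: nn_integral_distr measurable_Pair1')
  finally show ?thesis .
qed

lemma indep_vars_indep_var:
  assumes "indep_vars (\<lambda>_. N) X I" "i \<in> I" "j \<in> I" "i \<noteq> j"
  shows "indep_var N (X i) N (X j)"
proof -
  have "indep_var (PiM {i} (\<lambda>_. N)) (\<lambda>w. restrict (\<lambda>k. X k w) {i})
                  (PiM {j} (\<lambda>_. N)) (\<lambda>w. restrict (\<lambda>k. X k w) {j})"
    using assms by (intro indep_var_restrict) auto
  from indep_var_compose[OF this measurable_component_singleton measurable_component_singleton]
  show ?thesis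
    by (simp add: o_def)
qed

lemma expected_descent:
  fixes \<phi> :: "'v::euclidean_space \<Rightarrow> real"
  assumes sm: "L_smooth L \<phi> g" and lb: "\<And>y. m \<le> \<phi> y"
    and D: "integrable M D" "expectation D = g x" "integrable M (\<lambda>w. (norm (D w))\<^sup>2)"
  shows "integrable M (\<lambda>w. \<phi> (x - \<gamma> *\<^sub>R D w))"
    and "(\<integral>w. \<phi> (x - \<gamma> *\<^sub>R D w) \<partial>M)
           \<le> \<phi> x - \<gamma> * (norm (g x))\<^sup>2 + L * \<gamma>\<^sup>2 / 2 * (\<integral>w. (norm (D w))\<^sup>2 \<partial>M)"
proof -
  define R where "R w = \<phi> x - \<gamma> * (g x \<bullet> D w) + L * \<gamma>\<^sup>2 / 2 * (norm (D w))\<^sup>2" for w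
  have descent: "\<phi> (x - \<gamma> *\<^sub>R D w) \<le> R w" for w
    using L_smooth_descent[OF sm, of "x - \<gamma> *\<^sub>R D w" x]
    by (simp add: R_def power_mult_distrib)
  have R: "integrable M R"
    unfolding R_def using D by auto
  have "(\<lambda>w. \<phi> (x - \<gamma> *\<^sub>R D w)) \<in> borel_measurable M"
    using D(1) L_smooth_continuous[OF sm] by (auto intro: borel_measurable_continuous_on)
  then have meas: "(\<lambda>w. \<phi> (x - \<gamma> *\<^sub>R D w) - m) \<in> borel_measurable M"
    by measurable
  have bound: "norm (\<phi> (x - \<gamma> *\<^sub>R D w) - m) \<le> norm (R w - m)" for w
    using lb[of "x - \<gamma> *\<^sub>R D w"] descent[of w] by simp
  have "integrable M (\<lambda>w. R w - m)"
    using R by simp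
  from Bochner_Integration.integrable_bound[OF this meas AE_I2[OF bound]]
  have "integrable M (\<lambda>w. (\<phi> (x - \<gamma> *\<^sub>R D w) - m) + m)"
    by (rule Bochner_Integration.integrable_add) simp
  then show int: "integrable M (\<lambda>w. \<phi> (x - \<gamma> *\<^sub>R D w))"
    unfolding diff_add_cancel .
  have "(\<integral>w. \<phi> (x - \<gamma> *\<^sub>R D w) \<partial>M) \<le> (\<integral>w. R w \<partial>M)"
    using int R descent by (rule integral_mono)
  also have "\<dots> = \<phi> x - \<gamma> * (norm (g x))\<^sup>2 + L * \<gamma>\<^sup>2 / 2 * (\<integral>w. (norm (D w))\<^sup>2 \<partial>M)"
    unfolding R_def using D by (simp add: prob_space flip: power2_norm_eq_inner)
  finally show "(\<integral>w. \<phi> (x - \<gamma> *\<^sub>R D w) \<partial>M)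
      \<le> \<phi> x - \<gamma> * (norm (g x))\<^sup>2 + L * \<gamma>\<^sup>2 / 2 * (\<integral>w. (norm (D w))\<^sup>2 \<partial>M)" .
qed

end

section \<open>Unrolling a perturbed descent recursion\<close>

lemma Min_le_of_perturbed_descent:
  fixes D N :: "nat \<Rightarrow> ennreal" and b c :: ennreal
  assumes step: "\<And>t. t < k \<Longrightarrow> D (Suc t) + c * N t \<le> (1 + b) * D t"
  shows "of_nat k * c * Min (N ` {..<k}) \<le> (1 + b) ^ k * D 0"
proof -
  let ?m = "Min (N ` {..<k})"
  have bound: "D t + of_nat t * c * ?m \<le> (1 + b) ^ t * D 0" if "t \<le> k" for t
    using that
  proof (induction t)
    case 0
    then show ?case by simp
  next
    case (Suc t)
    then have "t < k" by simp
    have "D (Suc t) + of_nat (Suc t) * c * ?m = D (Suc t) + c * ?m + of_nat t * c * ?m"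
      by (simp add: algebra_simps)
    also have "\<dots> \<le> D (Suc t) + c * N t + of_nat t * c * ?m"
      using \<open>t < k\<close> by (intro add_mono mult_left_mono Min_le order_refl) auto
    also have "\<dots> \<le> (1 + b) * D t + (1 + b) * (of_nat t * c * ?m)"
      using step[OF \<open>t < k\<close>] by (intro add_mono) (auto intro: mult_right_mono[of 1 "1 + b", simplified])
    also have "\<dots> = (1 + b) * (D t + of_nat t * c * ?m)"
      by (simp add: distrib_left)
    also have "\<dots> \<le> (1 + b) * ((1 + b) ^ t * D 0)"
      using Suc by (intro mult_left_mono) auto
    finally show ?case
      by (simp add: mult.assoc)
  qed
  have "of_nat k * c * ?m \<le> D k + of_nat k * c * ?m"
    by (rule add_increasing) simp_all
  also have "\<dots> \<le> (1 + b) ^ k * D 0"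
    by (rule bound) simp
  finally show ?thesis .
qed

lemma ennreal_le_divide_of_mult_le:
  assumes "0 < c" "ennreal c * m \<le> ennreal B"
  shows "m \<le> ennreal (B / c)"
proof -
  have "m = ennreal c * m / ennreal c"
    using assms(1) by (simp add: mult.commute ennreal_mult_divide_eq)
  also have "\<dots> \<le> ennreal B / ennreal c"
    using assms(2) by (rule divide_right_mono_ennreal)
  also have "\<dots> = ennreal (B / c)"
    using assms(1) by (cases "0 \<le> B") (simp_all add: divide_ennreal ennreal_neg divide_nonpos_pos)
  finally show ?thesis .
qed

section \<open>Compressed gradient descent on the averaged function\<close>

locale compressed_gd =
  fixes n :: nat
    and f :: "nat \<Rightarrow> 'v::euclidean_space \<Rightarrow> real"
    and g :: "nat \<Rightarrow> 'v \<Rightarrow> 'v"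
    and L :: "nat \<Rightarrow> real"
    and fs :: "nat \<Rightarrow> real"
    and xs :: "nat \<Rightarrow> 'v"
    and \<alpha> :: "nat \<Rightarrow> real"
    and om :: "nat \<Rightarrow> real"
    and Gt :: "'v \<Rightarrow> 'v"
    and M :: "'a measure"
    and S :: "'s measure"
    and \<xi> :: "nat \<Rightarrow> nat \<Rightarrow> 'a \<Rightarrow> 's"
    and Q :: "nat \<Rightarrow> nat \<Rightarrow> 's \<Rightarrow> 'v \<Rightarrow> 'v"
    and X :: "nat \<Rightarrow> 'a \<Rightarrow> 'v"
    and x0 :: "'v"
    and \<gamma> :: real
  assumes n: "n \<ge> 1"
    and smooth: "\<forall>i<n. L_smooth (L i) (f i) (g i)"
    and f_lower: "\<forall>i<n. \<forall>y. fs i \<le> f i y"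
    and om: "\<forall>i<n. om i \<ge> 0"
    and Gt: "\<forall>x. GDERIV (\<lambda>y. (1 / real n) * (\<Sum>i<n. f i (\<alpha> i *\<^sub>R y + (1 - \<alpha> i) *\<^sub>R xs i))) x :> Gt x"
    and M: "prob_space M"
    and indep: "prob_space.indep_vars M (\<lambda>_. S) (\<lambda>(i, t). \<xi> i t) ({..<n} \<times> UNIV)"
    and Qmeas: "\<forall>i<n. \<forall>t. (\<lambda>(s, x). Q i t s x) \<in> borel_measurable (S \<Otimes>\<^sub>M borel)"
    and QB: "\<forall>i<n. \<forall>t. in_B M (\<lambda>w. Q i t (\<xi> i t w)) (om i)"
    and X0: "\<forall>w. X 0 w = x0"
    and Xstep: "\<forall>t w. X (Suc t) w = X t w - \<gamma> *\<^sub>R ((1 / real n) *\<^sub>R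
        (\<Sum>i<n. Q i t (\<xi> i t w) (\<alpha> i *\<^sub>R g i (\<alpha> i *\<^sub>R X t w + (1 - \<alpha> i) *\<^sub>R xs i))))"
    and gamma: "0 < \<gamma>" "\<gamma> * ((1 / real n) * (\<Sum>i<n. (\<alpha> i)\<^sup>2 * L i)) \<le> 1"
begin

sublocale prob_space M
  by (rule M)

definition T :: "nat \<Rightarrow> 'v \<Rightarrow> 'v" where
  "T i x = \<alpha> i *\<^sub>R x + (1 - \<alpha> i) *\<^sub>R xs i"

definition f_tilde :: "'v \<Rightarrow> real" where
  "f_tilde x = (1 / real n) * (\<Sum>i<n. f i (T i x))"

definition f_star :: real where
  "f_star = (1 / real n) * (\<Sum>i<n. fs i)"

definition gap :: "'v \<Rightarrow> real" where
  "gap x = f_tilde x - f_star"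

definition local_grad :: "nat \<Rightarrow> 'v \<Rightarrow> 'v" where
  "local_grad i x = \<alpha> i *\<^sub>R g i (T i x)"

definition L_alpha :: real where
  "L_alpha = (1 / real n) * (\<Sum>i<n. (\<alpha> i)\<^sup>2 * L i)"

definition L_omega_max :: real where
  "L_omega_max = Max ((\<lambda>i. L i * om i * (\<alpha> i)\<^sup>2) ` {..<n})"

definition \<beta> :: real where
  "\<beta> = L_alpha * \<gamma>\<^sup>2 * L_omega_max / real n"

lemma n_pos: "0 < real n"
  using n by simp

lemma L_nonneg: "i < n \<Longrightarrow> 0 \<le> L i"
  using smooth L_smooth_nonneg by blast

lemma L_alpha_nonneg: "0 \<le> L_alpha"
  unfolding L_alpha_def using L_nonneg by (auto intro!: sum_nonneg divide_nonneg_nonneg)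

lemma L_alpha_step: "L_alpha * \<gamma> \<le> 1"
  using gamma(2) unfolding L_alpha_def by (simp add: mult.commute)

lemma L_omega_max_ge: "i < n \<Longrightarrow> L i * om i * (\<alpha> i)\<^sup>2 \<le> L_omega_max"
  unfolding L_omega_max_def by (rule Max_ge) auto

lemma L_omega_max_nonneg: "0 \<le> L_omega_max"
proof -
  have "0 \<le> L 0 * om 0 * (\<alpha> 0)\<^sup>2"
    using L_nonneg[of 0] om n by simp
  also have "\<dots> \<le> L_omega_max"
    using L_omega_max_ge[of 0] n by simp
  finally show ?thesis .
qed

lemma \<beta>_nonneg: "0 \<le> \<beta>"
  unfolding \<beta>_def using L_alpha_nonneg L_omega_max_nonneg by simp

lemma f_tilde_smooth_avg: "L_smooth L_alpha f_tilde (\<lambda>x. (1 / real n) *\<^sub>R (\<Sum>i<n. local_grad i x))"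
proof -
  have "L_smooth ((\<alpha> i)\<^sup>2 * L i) (\<lambda>x. f i (T i x)) (local_grad i)" if "i < n" for i
  proof -
    have "L_smooth (L i) (f i) (g i)"
      using smooth that by blast
    from L_smooth_affine[OF this, of "\<alpha> i" "(1 - \<alpha> i) *\<^sub>R xs i"] show ?thesis
      unfolding T_def local_grad_def[abs_def] .
  qed
  then have "L_smooth (\<Sum>i<n. (\<alpha> i)\<^sup>2 * L i) (\<lambda>x. \<Sum>i<n. f i (T i x)) (\<lambda>x. \<Sum>i<n. local_grad i x)"
    by (intro L_smooth_sum) auto
  from L_smooth_scale[OF this, of "1 / real n"] show ?thesis
    unfolding L_alpha_def f_tilde_def[abs_def] by simp
qed

lemma Gt_eq: "Gt x = (1 / real n) *\<^sub>R (\<Sum>i<n. local_grad i x)"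
proof (rule gderiv_unique)
  show "GDERIV f_tilde x :> Gt x"
    unfolding f_tilde_def[abs_def] T_def using Gt by blast
  show "GDERIV f_tilde x :> (1 / real n) *\<^sub>R (\<Sum>i<n. local_grad i x)"
    using f_tilde_smooth_avg unfolding L_smooth_def by blast
qed

lemma f_tilde_smooth: "L_smooth L_alpha f_tilde Gt"
proof -
  have "Gt = (\<lambda>x. (1 / real n) *\<^sub>R (\<Sum>i<n. local_grad i x))"
    using Gt_eq by blast
  with f_tilde_smooth_avg show ?thesis
    by simp
qed

lemma f_star_le: "f_star \<le> f_tilde x"
proof -
  have "(\<Sum>i<n. fs i) \<le> (\<Sum>i<n. f i (T i x))"
    using f_lower by (intro sum_mono) auto
  then show ?thesis
    unfolding f_tilde_def f_star_def using n_pos by (simp add: divide_right_mono)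
qed

lemma gap_nonneg: "0 \<le> gap x"
  unfolding gap_def using f_star_le by simp

lemma compression_variance_bound:
  "(\<Sum>i<n. om i * (norm (local_grad i x))\<^sup>2) \<le> 2 * L_omega_max * real n * gap x"
proof -
  have "om i * (norm (local_grad i x))\<^sup>2 \<le> 2 * L_omega_max * (f i (T i x) - fs i)" if i: "i < n" for i
  proof -
    have "om i * (norm (local_grad i x))\<^sup>2 = om i * (\<alpha> i)\<^sup>2 * (norm (g i (T i x)))\<^sup>2"
      by (simp add: local_grad_def power_mult_distrib)
    also have "\<dots> \<le> om i * (\<alpha> i)\<^sup>2 * (2 * L i * (f i (T i x) - fs i))"
      using L_smooth_gradient_bound[of "L i" "f i" "g i" "fs i"] smooth f_lower om i
      by (intro mult_left_mono) auto
    also have "\<dots> = 2 * (L i * om i * (\<alpha> i)\<^sup>2) * (f i (T i x) - fs i)"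
      by simp
    also have "\<dots> \<le> 2 * L_omega_max * (f i (T i x) - fs i)"
      using L_omega_max_ge[OF i] f_lower i by (intro mult_right_mono) auto
    finally show ?thesis .
  qed
  then have "(\<Sum>i<n. om i * (norm (local_grad i x))\<^sup>2) \<le> (\<Sum>i<n. 2 * L_omega_max * (f i (T i x) - fs i))"
    by (intro sum_mono) auto
  also have "\<dots> = 2 * L_omega_max * real n * gap x"
    unfolding gap_def f_tilde_def f_star_def using n_pos
    by (simp add: sum_distrib_left[symmetric] sum_distrib_right[symmetric] sum_subtractf algebra_simps)
  finally show ?thesis .
qed

definition seeds :: "'a \<Rightarrow> nat \<times> nat \<Rightarrow> 's" where
  "seeds w = (\<lambda>(i, t). \<xi> i t w)"

text \<open>The compressor C_i^t of the paper is Q i t applied to the seed z (i, t).\<close>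

definition direction :: "nat \<Rightarrow> 'v \<Rightarrow> (nat \<times> nat \<Rightarrow> 's) \<Rightarrow> 'v" where
  "direction t x z = (1 / real n) *\<^sub>R (\<Sum>i<n. Q i t (z (i, t)) (local_grad i x))"

lemma seeds_apply [simp]: "seeds w (i, t) = \<xi> i t w"
  by (simp add: seeds_def)

abbreviation seed_space :: "(nat \<times> nat) set \<Rightarrow> (nat \<times> nat \<Rightarrow> 's) measure" where
  "seed_space K \<equiv> PiM K (\<lambda>_. S)"

lemma Q_measurable:
  assumes "i < n" "Z \<in> measurable N S" "Y \<in> borel_measurable N"
  shows "(\<lambda>w. Q i t (Z w) (Y w)) \<in> borel_measurable N"
proof -
  have "(\<lambda>(s, x). Q i t s x) \<in> borel_measurable (S \<Otimes>\<^sub>M borel)"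
    using Qmeas assms(1) by blast
  from measurable_compose[OF measurable_Pair[OF assms(2,3)] this] show ?thesis
    by simp
qed

lemma compressed_message_moments:
  assumes "i < n"
  shows "integrable M (\<lambda>w. Q i t (\<xi> i t w) y)"
    and "expectation (\<lambda>w. Q i t (\<xi> i t w) y) = y"
    and "integrable M (\<lambda>w. (norm (Q i t (\<xi> i t w) y - y))\<^sup>2)"
    and "(\<integral>w. (norm (Q i t (\<xi> i t w) y - y))\<^sup>2 \<partial>M) \<le> om i * (norm y)\<^sup>2"
  using QB om assms in_B_variance[of M "\<lambda>w. Q i t (\<xi> i t w)" "om i" y] unfolding in_B_def by auto

lemma compressed_messages_indep:
  assumes "i < n" "j < n" "i \<noteq> j"
  shows "indep_var borel (\<lambda>w. Q i t (\<xi> i t w) y) borel (\<lambda>w. Q j t (\<xi> j t w) y')"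
proof -
  have "indep_var S (\<xi> i t) S (\<xi> j t)"
    using indep_vars_indep_var[OF indep, of "(i, t)" "(j, t)"] assms by simp
  moreover have "(\<lambda>s. Q k t s z) \<in> borel_measurable S" if "k < n" for k z
    using Q_measurable[OF that measurable_ident_sets[OF refl] measurable_const] by simp
  ultimately show ?thesis
    using indep_var_compose assms unfolding o_def by blast
qed

lemma direction_moments:
  shows "integrable M (\<lambda>w. direction t x (seeds w))"
    and "expectation (\<lambda>w. direction t x (seeds w)) = Gt x"
    and "integrable M (\<lambda>w. (norm (direction t x (seeds w)))\<^sup>2)"
    and "(\<integral>w. (norm (direction t x (seeds w)))\<^sup>2 \<partial>M) \<le> (norm (Gt x))\<^sup>2 + 2 * L_omega_max * gap x / real n"
proof -
  define c where "c i w = Q i t (\<xi> i t w) (local_grad i x)" for i w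
  have moments: "integrable M (c i)" "expectation (c i) = local_grad i x"
    "integrable M (\<lambda>w. (norm (c i w - local_grad i x))\<^sup>2)"
    "(\<integral>w. (norm (c i w - local_grad i x))\<^sup>2 \<partial>M) \<le> om i * (norm (local_grad i x))\<^sup>2" if "i < n" for i
    unfolding c_def using compressed_message_moments[OF that] by auto
  have dir: "direction t x (seeds w) = (1 / real n) *\<^sub>R (\<Sum>i<n. c i w)" for w
    by (simp add: direction_def c_def)
  have sum_int: "integrable M (\<lambda>w. (norm (\<Sum>i<n. c i w))\<^sup>2)"
    and sum_eq: "(\<integral>w. (norm (\<Sum>i<n. c i w))\<^sup>2 \<partial>M) = (norm (\<Sum>i<n. local_grad i x))\<^sup>2
                   + (\<Sum>i<n. \<integral>w. (norm (c i w - local_grad i x))\<^sup>2 \<partial>M)"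
    using second_moment_sum_indep[of "{..<n}" c] moments compressed_messages_indep
    unfolding c_def by auto
  show "integrable M (\<lambda>w. direction t x (seeds w))"
    unfolding dir using moments by (auto intro!: Bochner_Integration.integrable_sum)
  show "expectation (\<lambda>w. direction t x (seeds w)) = Gt x"
    unfolding dir Gt_eq using moments by (simp add: Bochner_Integration.integral_sum)
  have norm_dir: "(norm (direction t x (seeds w)))\<^sup>2 = (1 / real n)\<^sup>2 * (norm (\<Sum>i<n. c i w))\<^sup>2" for w
    unfolding dir by (simp add: power_divide)
  show "integrable M (\<lambda>w. (norm (direction t x (seeds w)))\<^sup>2)"
    unfolding norm_dir using sum_int by simp
  have "(\<Sum>i<n. \<integral>w. (norm (c i w - local_grad i x))\<^sup>2 \<partial>M) \<le> (\<Sum>i<n. om i * (norm (local_grad i x))\<^sup>2)"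
    using moments(4) by (intro sum_mono) auto
  also have "\<dots> \<le> 2 * L_omega_max * real n * gap x"
    by (rule compression_variance_bound)
  finally have "(\<integral>w. (norm (direction t x (seeds w)))\<^sup>2 \<partial>M)
      \<le> (1 / real n)\<^sup>2 * ((norm (\<Sum>i<n. local_grad i x))\<^sup>2 + 2 * L_omega_max * real n * gap x)"
    unfolding norm_dir by (simp add: sum_eq mult_left_mono)
  also have "\<dots> = (norm (Gt x))\<^sup>2 + 2 * L_omega_max * gap x / real n"
    unfolding Gt_eq using n_pos by (simp add: power_mult_distrib power2_eq_square field_simps)
  finally show "(\<integral>w. (norm (direction t x (seeds w)))\<^sup>2 \<partial>M)
      \<le> (norm (Gt x))\<^sup>2 + 2 * L_omega_max * gap x / real n" .
qed

lemma expected_update: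
  "(\<integral>\<^sup>+ w. ennreal (gap (x - \<gamma> *\<^sub>R direction t x (seeds w))) \<partial>M) + ennreal (\<gamma> / 2 * (norm (Gt x))\<^sup>2)
     \<le> ennreal ((1 + \<beta>) * gap x)"
proof -
  let ?y = "\<lambda>w. x - \<gamma> *\<^sub>R direction t x (seeds w)"
  note dm = direction_moments[of t x]
  note descent = expected_descent[OF f_tilde_smooth f_star_le dm(1,2,3), of \<gamma>]
  have int: "integrable M (\<lambda>w. gap (?y w))"
    unfolding gap_def using descent(1) by simp
  have "(\<integral>w. gap (?y w) \<partial>M) = (\<integral>w. f_tilde (?y w) \<partial>M) - f_star"
    unfolding gap_def using descent(1) by (simp add: prob_space)
  also have "\<dots> \<le> gap x - \<gamma> * (norm (Gt x))\<^sup>2 + L_alpha * \<gamma>\<^sup>2 / 2 * (\<integral>w. (norm (direction t x (seeds w)))\<^sup>2 \<partial>M)"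
    using descent(2) unfolding gap_def by simp
  also have "\<dots> \<le> gap x - \<gamma> * (norm (Gt x))\<^sup>2
      + L_alpha * \<gamma>\<^sup>2 / 2 * ((norm (Gt x))\<^sup>2 + 2 * L_omega_max * gap x / real n)"
    using dm(4) L_alpha_nonneg by (intro add_left_mono mult_left_mono) auto
  also have "\<dots> \<le> (1 + \<beta>) * gap x - \<gamma> / 2 * (norm (Gt x))\<^sup>2"
  proof -
    have "L_alpha * \<gamma>\<^sup>2 \<le> \<gamma>"
      using L_alpha_step gamma(1) by (simp add: power2_eq_square mult_le_cancel_right1)
    then have "L_alpha * \<gamma>\<^sup>2 / 2 * (norm (Gt x))\<^sup>2 \<le> \<gamma> / 2 * (norm (Gt x))\<^sup>2"
      by (intro mult_right_mono) auto
    moreover have "L_alpha * \<gamma>\<^sup>2 / 2 * (2 * L_omega_max * gap x / real n) = \<beta> * gap x"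
      unfolding \<beta>_def by (simp add: field_simps)
    ultimately show ?thesis
      by (simp add: algebra_simps)
  qed
  finally have bound: "(\<integral>w. gap (?y w) \<partial>M) + \<gamma> / 2 * (norm (Gt x))\<^sup>2 \<le> (1 + \<beta>) * gap x"
    by simp
  have "(\<integral>\<^sup>+ w. ennreal (gap (?y w)) \<partial>M) = ennreal (\<integral>w. gap (?y w) \<partial>M)"
    using int gap_nonneg by (simp add: nn_integral_eq_integral)
  moreover have "ennreal (\<integral>w. gap (?y w) \<partial>M) + ennreal (\<gamma> / 2 * (norm (Gt x))\<^sup>2)
      = ennreal ((\<integral>w. gap (?y w) \<partial>M) + \<gamma> / 2 * (norm (Gt x))\<^sup>2)"
    using gamma(1) gap_nonneg by (intro ennreal_plus[symmetric] integral_nonneg_AE) auto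
  ultimately show ?thesis
    using bound by (simp add: ennreal_leI)
qed

primrec iterate :: "nat \<Rightarrow> (nat \<times> nat \<Rightarrow> 's) \<Rightarrow> 'v" where
  "iterate 0 z = x0"
| "iterate (Suc t) z = iterate t z - \<gamma> *\<^sub>R direction t (iterate t z) z"

lemma X_iterate: "X t w = iterate t (seeds w)"
  by (induction t) (simp_all add: X0 Xstep direction_def local_grad_def T_def)

lemma direction_cong:
  "(\<And>i. i < n \<Longrightarrow> z (i, t) = z' (i, t)) \<Longrightarrow> direction t x z = direction t x z'"
  unfolding direction_def by (metis (no_types, lifting) lessThan_iff sum.cong)

lemma iterate_cong:
  "(\<And>i s. i < n \<Longrightarrow> s < t \<Longrightarrow> z (i, s) = z' (i, s)) \<Longrightarrow> iterate t z = iterate t z'"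
proof (induction t)
  case (Suc t)
  then have "iterate t z = iterate t z'"
    by simp
  moreover have "direction t x z = direction t x z'" for x
    using Suc.prems by (intro direction_cong) simp
  ultimately show ?case
    by simp
qed simp

lemma local_grad_continuous:
  assumes "i < n"
  shows "continuous_on UNIV (local_grad i)"
proof -
  have "continuous_on UNIV (g i)"
    using smooth L_smooth_gradient_continuous assms by blast
  moreover have "continuous_on UNIV (T i)"
    unfolding T_def[abs_def] by (intro continuous_intros)
  ultimately have "continuous_on UNIV (\<lambda>x. g i (T i x))"
    by (rule continuous_on_compose2) auto
  then show ?thesis
    unfolding local_grad_def[abs_def] by (rule continuous_on_scaleR[OF continuous_on_const])
qed

lemma direction_measurable:
  assumes Y: "Y \<in> borel_measurable N" and Z: "Z \<in> measurable N (seed_space K)"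
    and K: "{..<n} \<times> {t} \<subseteq> K"
  shows "(\<lambda>w. direction t (Y w) (Z w)) \<in> borel_measurable N"
proof -
  have "(\<lambda>w. Q i t (Z w (i, t)) (local_grad i (Y w))) \<in> borel_measurable N" if "i < n" for i
  proof (rule Q_measurable[OF that])
    show "(\<lambda>w. Z w (i, t)) \<in> measurable N S"
      using measurable_compose[OF Z measurable_component_singleton, of "(i, t)"] K that by auto
    show "(\<lambda>w. local_grad i (Y w)) \<in> borel_measurable N"
      using borel_measurable_continuous_on[OF local_grad_continuous[OF that] Y] .
  qed
  then show ?thesis
    unfolding direction_def by (intro borel_measurable_scaleR borel_measurable_sum) auto
qed

lemma iterate_measurable: "{..<n} \<times> {..<t} \<subseteq> K \<Longrightarrow> iterate t \<in> borel_measurable (seed_space K)"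
proof (induction t)
  case 0
  have "iterate 0 = (\<lambda>_. x0)"
    by (rule ext) simp
  then show ?case
    by simp
next
  case (Suc t)
  then have it: "iterate t \<in> borel_measurable (seed_space K)"
    by (auto simp: subset_iff)
  moreover have "{..<n} \<times> {t} \<subseteq> K"
    using Suc.prems by auto
  ultimately have "(\<lambda>z. direction t (iterate t z) z) \<in> borel_measurable (seed_space K)"
    by (intro direction_measurable measurable_ident_sets) auto
  with it show ?case
    by simp
qed

text \<open>Independence is stated for the seeds rather than for X t, because
  indep_var needs both variables in the same space; X t is a function of the past seeds.\<close>

definition past_seeds :: "nat \<Rightarrow> 'a \<Rightarrow> nat \<times> nat \<Rightarrow> 's" where
  "past_seeds t w = restrict (seeds w) ({..<n} \<times> {..<t})"

definition present_seeds :: "nat \<Rightarrow> 'a \<Rightarrow> nat \<times> nat \<Rightarrow> 's" where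
  "present_seeds t w = restrict (seeds w) ({..<n} \<times> {t})"

lemma past_present_indep:
  "indep_var (seed_space ({..<n} \<times> {..<t})) (past_seeds t) (seed_space ({..<n} \<times> {t})) (present_seeds t)"
proof -
  have "seeds w = (\<lambda>p. (\<lambda>(i, t). \<xi> i t) p w)" for w
    by (rule ext) (simp add: seeds_def split: prod.split)
  then show ?thesis
    unfolding past_seeds_def[abs_def] present_seeds_def[abs_def]
    by (simp only:) (rule indep_var_restrict[OF indep], auto)
qed

lemma past_seeds_measurable: "past_seeds t \<in> measurable M (seed_space ({..<n} \<times> {..<t}))"
  using indep_var_rv1[OF past_present_indep] .

lemma present_seeds_measurable: "present_seeds t \<in> measurable M (seed_space ({..<n} \<times> {t}))"
  using indep_var_rv2[OF past_present_indep] .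

lemma X_past: "X t w = iterate t (past_seeds t w)"
  unfolding X_iterate past_seeds_def by (rule iterate_cong) auto

lemma direction_present_seeds: "direction t x (present_seeds t w) = direction t x (seeds w)"
  by (rule direction_cong) (simp add: present_seeds_def)

lemma X_Suc_present: "X (Suc t) w = X t w - \<gamma> *\<^sub>R direction t (X t w) (present_seeds t w)"
  by (simp add: X_iterate direction_present_seeds)

lemma X_measurable: "X t \<in> borel_measurable M"
  unfolding X_past[abs_def]
  using measurable_compose[OF past_seeds_measurable iterate_measurable[OF order_refl]] .

lemma gap_continuous: "continuous_on UNIV gap"
  unfolding gap_def[abs_def] using L_smooth_continuous[OF f_tilde_smooth] by (intro continuous_intros)

lemma Gt_continuous: "continuous_on UNIV Gt"
  by (rule L_smooth_gradient_continuous[OF f_tilde_smooth])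

lemma expected_gap_recursion:
  "(\<integral>\<^sup>+ w. ennreal (gap (X (Suc t) w)) \<partial>M) + ennreal (\<gamma> / 2) * (\<integral>\<^sup>+ w. ennreal ((norm (Gt (X t w)))\<^sup>2) \<partial>M)
     \<le> ennreal (1 + \<beta>) * (\<integral>\<^sup>+ w. ennreal (gap (X t w)) \<partial>M)"
proof -
  define H where "H p = ennreal (gap (iterate t (fst p) - \<gamma> *\<^sub>R direction t (iterate t (fst p)) (snd p)))
    + ennreal (\<gamma> / 2 * (norm (Gt (iterate t (fst p))))\<^sup>2)" for p
  have H_meas: "H \<in> borel_measurable (seed_space ({..<n} \<times> {..<t}) \<Otimes>\<^sub>M seed_space ({..<n} \<times> {t}))"
  proof -
    have x: "(\<lambda>p. iterate t (fst p))
        \<in> borel_measurable (seed_space ({..<n} \<times> {..<t}) \<Otimes>\<^sub>M seed_space ({..<n} \<times> {t}))"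
      using iterate_measurable[OF order_refl] by measurable
    with direction_measurable[OF x measurable_snd order_refl]
    have "(\<lambda>p. iterate t (fst p) - \<gamma> *\<^sub>R direction t (iterate t (fst p)) (snd p))
        \<in> borel_measurable (seed_space ({..<n} \<times> {..<t}) \<Otimes>\<^sub>M seed_space ({..<n} \<times> {t}))"
      by measurable
    with borel_measurable_continuous_on[OF gap_continuous]
      borel_measurable_continuous_on[OF Gt_continuous x]
    show ?thesis
      unfolding H_def by measurable
  qed
  have inner: "(\<integral>\<^sup>+ w'. H (y, present_seeds t w') \<partial>M) \<le> ennreal ((1 + \<beta>) * gap (iterate t y))" for y
  proof -
    have "(\<lambda>w'. iterate t y - \<gamma> *\<^sub>R direction t (iterate t y) (present_seeds t w')) \<in> borel_measurable M"
      using direction_measurable[OF measurable_const present_seeds_measurable order_refl] by measurable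
    from borel_measurable_continuous_on[OF gap_continuous this] show ?thesis
      unfolding H_def using expected_update[of "iterate t y" t]
      by (simp add: nn_integral_add emeasure_space_1 direction_present_seeds)
  qed
  have "(\<integral>\<^sup>+ w. ennreal (gap (X (Suc t) w)) \<partial>M) + ennreal (\<gamma> / 2) * (\<integral>\<^sup>+ w. ennreal ((norm (Gt (X t w)))\<^sup>2) \<partial>M)
      = (\<integral>\<^sup>+ w. ennreal (gap (X (Suc t) w)) + ennreal (\<gamma> / 2) * ennreal ((norm (Gt (X t w)))\<^sup>2) \<partial>M)"
    using borel_measurable_continuous_on[OF gap_continuous X_measurable]
      borel_measurable_continuous_on[OF Gt_continuous X_measurable]
    by (simp add: nn_integral_add nn_integral_cmult)
  also have "\<dots> = (\<integral>\<^sup>+ w. H (past_seeds t w, present_seeds t w) \<partial>M)"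
    using gamma(1) by (intro nn_integral_cong) (simp add: H_def flip: X_past X_Suc_present ennreal_mult)
  also have "\<dots> = (\<integral>\<^sup>+ w. (\<integral>\<^sup>+ w'. H (past_seeds t w, present_seeds t w') \<partial>M) \<partial>M)"
    by (rule nn_integral_indep_freeze[OF past_present_indep H_meas])
  also have "\<dots> \<le> (\<integral>\<^sup>+ w. ennreal (1 + \<beta>) * ennreal (gap (X t w)) \<partial>M)"
    using inner \<beta>_nonneg gap_nonneg by (intro nn_integral_mono) (simp add: ennreal_mult X_past)
  also have "\<dots> = ennreal (1 + \<beta>) * (\<integral>\<^sup>+ w. ennreal (gap (X t w)) \<partial>M)"
    using borel_measurable_continuous_on[OF gap_continuous X_measurable] by (simp add: nn_integral_cmult)
  finally show ?thesis .
qed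

lemma min_expected_gradient_bound:
  assumes k: "k \<ge> 1"
  shows "Min ((\<lambda>t. \<integral>\<^sup>+ w. ennreal ((norm (Gt (X t w)))\<^sup>2) \<partial>M) ` {..<k})
    \<le> ennreal (2 * (1 + 2 * L_alpha * \<gamma>\<^sup>2 * L_omega_max / real n) ^ k / (\<gamma> * real k) * gap x0)"
proof -
  let ?m = "Min ((\<lambda>t. \<integral>\<^sup>+ w. ennreal ((norm (Gt (X t w)))\<^sup>2) \<partial>M) ` {..<k})"
  have "of_nat k * ennreal (\<gamma> / 2) * ?m \<le> (1 + ennreal \<beta>) ^ k * (\<integral>\<^sup>+ w. ennreal (gap (X 0 w)) \<partial>M)"
    using expected_gap_recursion \<beta>_nonneg
    by (intro Min_le_of_perturbed_descent) (simp add: ennreal_plus)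
  also have "\<dots> = ennreal ((1 + \<beta>) ^ k * gap x0)"
  proof -
    have "1 + ennreal \<beta> = ennreal (1 + \<beta>)"
      using \<beta>_nonneg by simp
    then show ?thesis
      using X0 \<beta>_nonneg gap_nonneg
      by (simp add: emeasure_space_1 ennreal_power ennreal_mult del: ennreal_plus)
  qed
  also have "of_nat k * ennreal (\<gamma> / 2) = ennreal (\<gamma> * real k / 2)"
    using gamma(1) by (simp add: ennreal_of_nat_eq_real_of_nat flip: ennreal_mult)
  finally have "ennreal (\<gamma> * real k / 2) * ?m \<le> ennreal ((1 + \<beta>) ^ k * gap x0)" .
  then have "?m \<le> ennreal ((1 + \<beta>) ^ k * gap x0 / (\<gamma> * real k / 2))"
    using gamma(1) k by (intro ennreal_le_divide_of_mult_le) auto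
  also have "\<dots> \<le> ennreal (2 * (1 + 2 * L_alpha * \<gamma>\<^sup>2 * L_omega_max / real n) ^ k / (\<gamma> * real k) * gap x0)"
  proof (rule ennreal_leI)
    have "\<beta> \<le> 2 * L_alpha * \<gamma>\<^sup>2 * L_omega_max / real n"
      unfolding \<beta>_def using L_alpha_nonneg L_omega_max_nonneg n_pos by (simp add: divide_right_mono)
    then have "(1 + \<beta>) ^ k \<le> (1 + 2 * L_alpha * \<gamma>\<^sup>2 * L_omega_max / real n) ^ k"
      using \<beta>_nonneg by (intro power_mono) auto
    then have "(1 + \<beta>) ^ k * gap x0 \<le> (1 + 2 * L_alpha * \<gamma>\<^sup>2 * L_omega_max / real n) ^ k * gap x0"
      using gap_nonneg by (rule mult_right_mono)
    then show "(1 + \<beta>) ^ k * gap x0 / (\<gamma> * real k / 2)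
        \<le> 2 * (1 + 2 * L_alpha * \<gamma>\<^sup>2 * L_omega_max / real n) ^ k / (\<gamma> * real k) * gap x0"
      using gamma(1) k by (simp add: field_simps)
  qed
  finally show ?thesis .
qed

end

theorem theorem7:
  fixes n :: nat
    and f :: "nat \<Rightarrow> real ^ 'd \<Rightarrow> real"
    and g :: "nat \<Rightarrow> real ^ 'd \<Rightarrow> real ^ 'd"
    and L :: "nat \<Rightarrow> real"
    and fs :: "nat \<Rightarrow> real"
    and xs :: "nat \<Rightarrow> real ^ 'd"
    and \<alpha> :: "nat \<Rightarrow> real"
    and om :: "nat \<Rightarrow> real"
    and Gt :: "real ^ 'd \<Rightarrow> real ^ 'd"
    and M :: "'a measure"
    and S :: "'s measure"
    and \<xi> :: "nat \<Rightarrow> nat \<Rightarrow> 'a \<Rightarrow> 's"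
    and Q :: "nat \<Rightarrow> nat \<Rightarrow> 's \<Rightarrow> real ^ 'd \<Rightarrow> real ^ 'd"
    and X :: "nat \<Rightarrow> 'a \<Rightarrow> real ^ 'd"
    and x0 :: "real ^ 'd"
    and \<gamma> :: real
    and k :: nat
  assumes n: "n \<ge> 1"
    and smooth: "\<forall>i<n. L_smooth (L i) (f i) (g i)"
    and fmin: "\<forall>i<n. (\<exists>z. f i z = fs i) \<and> (\<forall>y. fs i \<le> f i y)"
    and stat: "\<forall>i<n. g i (xs i) = 0"
    and alpha: "\<forall>i<n. 0 < \<alpha> i \<and> \<alpha> i < 1"
    and om: "\<forall>i<n. om i \<ge> 0"
    and Gt: "\<forall>x. GDERIV (\<lambda>y. (1 / real n) * (\<Sum>i<n. f i (\<alpha> i *\<^sub>R y + (1 - \<alpha> i) *\<^sub>R xs i))) x :> Gt x"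
    and M: "prob_space M"
    and indep: "prob_space.indep_vars M (\<lambda>_. S) (\<lambda>(i, t). \<xi> i t) ({..<n} \<times> UNIV)"
    and Qmeas: "\<forall>i<n. \<forall>t. (\<lambda>(s, x). Q i t s x) \<in> borel_measurable (S \<Otimes>\<^sub>M borel)"
    and QB: "\<forall>i<n. \<forall>t. in_B M (\<lambda>w. Q i t (\<xi> i t w)) (om i)"
    and X0: "\<forall>w. X 0 w = x0"
    and Xstep: "\<forall>t w. X (Suc t) w = X t w - \<gamma> *\<^sub>R ((1 / real n) *\<^sub>R
        (\<Sum>i<n. Q i t (\<xi> i t w) (\<alpha> i *\<^sub>R g i (\<alpha> i *\<^sub>R X t w + (1 - \<alpha> i) *\<^sub>R xs i))))"
    and gamma: "0 < \<gamma>" "\<gamma> * ((1 / real n) * (\<Sum>i<n. (\<alpha> i)\<^sup>2 * L i)) \<le> 1"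
    and k: "k \<ge> 1"
  shows "Min ((\<lambda>t. \<integral>\<^sup>+ w. ennreal ((norm (Gt (X t w)))\<^sup>2) \<partial>M) ` {..<k}) \<le>
    ennreal (2 * (1 + 2 * ((1 / real n) * (\<Sum>i<n. (\<alpha> i)\<^sup>2 * L i)) * \<gamma>\<^sup>2
                     * Max ((\<lambda>i. L i * om i * (\<alpha> i)\<^sup>2) ` {..<n}) / real n) ^ k
             / (\<gamma> * real k)
           * ((1 / real n) * (\<Sum>i<n. f i (\<alpha> i *\<^sub>R x0 + (1 - \<alpha> i) *\<^sub>R xs i))
              - (1 / real n) * (\<Sum>i<n. fs i)))"
proof -
  interpret compressed_gd n f g L fs xs \<alpha> om Gt M S \<xi> Q X x0 \<gamma>
    unfolding compressed_gd_def
    using n smooth fmin om Gt M indep Qmeas QB X0 Xstep gamma by blast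
  from min_expected_gradient_bound[OF k] show ?thesis
    unfolding L_alpha_def L_omega_max_def gap_def f_tilde_def f_star_def T_def .
qed

end
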